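(* Let $\mu^*\in\mathbb{R}^{p\times K}$ and $L^*\in\mathcal{L}_K$ with $|\mathrm{supp}(\mu^* )|\le s$, $\min_{k\ne k'}\|\mu^*_k-\mu^*_{k'}\|_2\ge c_0$ and $\|\mu^*(L^* )^T\|_F^2\le C_0sn$ for constants $c_0,C_0>0$. Let $$\widetilde{\Theta}_K=\left\{\frac{\mu L^T-\mu^*(L^* )^T}{\|\mu L^T-\mu^*(L^* )^T\|_F}:\ \mu\in\mathbb{R}^{p\times K},\ |\mathrm{supp}(\mu)|\le s,\ L\in\mathcal{L}_K,\ \mu L^T\neq\mu^*(L^* )^T\right\}.$$ Then there is a constant $C>0$ (depending only on $c_0,C_0$) such that for all $\epsilon\in(0,2]$, $$\log N(\epsilon,\widetilde{\Theta}_K,\|\cdot\|_F)\le C\left(n\log K+s\log\frac{p}{s}+sK\log n+sK\log\frac{6}{\epsilon}\right),$$ where $N(\epsilon,\cdot,\|\cdot\|_F)$ is the $\epsilon$-covering number with respect to the Frobenius norm.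
   Context: $\mathcal{L}_K$ is the set of $n\times K$ matrices $L=[l_1,\dots,l_n]^T$ with each row $l_i\in\{0,1\}^K$ having exactly one entry equal to $1$ (cluster-assignment matrices). For $\mu=[\mu_1,\dots,\mu_K]\in\mathbb{R}^{p\times K}$, $\mathrm{supp}(\mu)$ is the set of indices of the nonzero rows of $\mu$. Here $n\ge 2$, $K\ge 2$ and $1\le s\le p$. *)

theory Defs
  imports Complex_Main
begin

text \<open>Matrices are represented as functions nat => nat => real; only the entries
  inside the stated index range are meaningful.  A p x K matrix mu has columns
  mu_k = (mu j k)_{j<p}; an n x K matrix L has rows l_i = (L i k)_{k<K}.\<close>

definition cluster_assignment :: "nat \<Rightarrow> nat \<Rightarrow> (nat \<Rightarrow> nat \<Rightarrow> real) \<Rightarrow> bool" where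
  "cluster_assignment n K L \<longleftrightarrow>
     (\<forall>i<n. (\<forall>k<K. L i k = 0 \<or> L i k = 1) \<and> card {k. k < K \<and> L i k = 1} = 1)"

definition mult_transpose :: "nat \<Rightarrow> nat \<Rightarrow> nat \<Rightarrow> (nat \<Rightarrow> nat \<Rightarrow> real) \<Rightarrow> (nat \<Rightarrow> nat \<Rightarrow> real) \<Rightarrow> (nat \<Rightarrow> nat \<Rightarrow> real)" where
  "mult_transpose p n K mu L = (\<lambda>j i. if j < p \<and> i < n then (\<Sum>k<K. mu j k * L i k) else 0)"

definition frob :: "nat \<Rightarrow> nat \<Rightarrow> (nat \<Rightarrow> nat \<Rightarrow> real) \<Rightarrow> real" where
  "frob p n A = sqrt (\<Sum>j<p. \<Sum>i<n. (A j i)\<^sup>2)"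

definition supp_card :: "nat \<Rightarrow> nat \<Rightarrow> (nat \<Rightarrow> nat \<Rightarrow> real) \<Rightarrow> nat" where
  "supp_card p K mu = card {j. j < p \<and> (\<exists>k<K. mu j k \<noteq> 0)}"

definition col_dist :: "nat \<Rightarrow> (nat \<Rightarrow> nat \<Rightarrow> real) \<Rightarrow> nat \<Rightarrow> nat \<Rightarrow> real" where
  "col_dist p mu k k' = sqrt (\<Sum>j<p. (mu j k - mu j k')\<^sup>2)"

definition Theta_tilde :: "nat \<Rightarrow> nat \<Rightarrow> nat \<Rightarrow> nat \<Rightarrow> (nat \<Rightarrow> nat \<Rightarrow> real) \<Rightarrow> (nat \<Rightarrow> nat \<Rightarrow> real)
    \<Rightarrow> (nat \<Rightarrow> nat \<Rightarrow> real) set" where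
  "Theta_tilde p n K s mus Ls =
     {(\<lambda>j i. (mult_transpose p n K mu L j i - mult_transpose p n K mus Ls j i) /
              frob p n (\<lambda>j i. mult_transpose p n K mu L j i - mult_transpose p n K mus Ls j i))
      | mu L. supp_card p K mu \<le> s \<and> cluster_assignment n K L \<and>
              mult_transpose p n K mu L \<noteq> mult_transpose p n K mus Ls}"

definition covering_number :: "nat \<Rightarrow> nat \<Rightarrow> real \<Rightarrow> (nat \<Rightarrow> nat \<Rightarrow> real) set \<Rightarrow> nat" where
  "covering_number p n eps S =
     Inf {card C | C. finite C \<and> (\<forall>x\<in>S. \<exists>c\<in>C. frob p n (\<lambda>j i. x j i - c j i) \<le> eps)}"

end

theory Submission
  imports Defs "HOL-Library.FuncSet"
begin

text \<open>Every element of Theta_tilde is a unit vector (mu L^T - mus Ls^T) / ||mu L^T - mus Ls^T||_F.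
  Once the assignment L and an s-set T of rows containing supp(mu) are fixed, it lies in the span
  of the s K + 1 matrices e_j (L e_k)^T (j in T, k < K) and mus Ls^T. The unit ball of an
  m-dimensional span is covered by (30 / eps)^m points: orthonormalise by Gram-Schmidt and round
  the coordinates to a grid of mesh eps / sqrt (m + 1). There are at most K^n assignments and
  (p choose s) <= (e p / s)^s supports, so the covering number is at most
  K^n (e p / s)^s (30 / eps)^(s K + 1), whose logarithm is at most 7 times the stated bound.\<close>

section \<open>Frobenius inner product and spans\<close>

type_synonym matrix = "nat \<Rightarrow> nat \<Rightarrow> real"

definition frob_inner :: "nat \<Rightarrow> nat \<Rightarrow> matrix \<Rightarrow> matrix \<Rightarrow> real" where
  "frob_inner p n A B = (\<Sum>j<p. \<Sum>i<n. A j i * B j i)"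

definition lin_comb :: "matrix list \<Rightarrow> (nat \<Rightarrow> real) \<Rightarrow> matrix" where
  "lin_comb vs c = (\<lambda>j i. \<Sum>k<length vs. c k * (vs!k) j i)"

definition orthonormal :: "nat \<Rightarrow> nat \<Rightarrow> matrix list \<Rightarrow> bool" where
  "orthonormal p n es \<longleftrightarrow>
     (\<forall>k<length es. \<forall>l<length es. frob_inner p n (es!k) (es!l) = (if k = l then 1 else 0))"

text \<open>Only the p x n entries of a matrix are meaningful, so membership in a span is
  equality with a linear combination on those entries.\<close>
definition in_span :: "nat \<Rightarrow> nat \<Rightarrow> matrix list \<Rightarrow> matrix \<Rightarrow> bool" where
  "in_span p n vs x \<longleftrightarrow> (\<exists>c. \<forall>j<p. \<forall>i<n. x j i = lin_comb vs c j i)"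

lemma frob_eq_sqrt_frob_inner: "frob p n A = sqrt (frob_inner p n A A)"
  by (simp add: frob_def frob_inner_def power2_eq_square)

lemma frob_inner_commute: "frob_inner p n A B = frob_inner p n B A"
  by (simp add: frob_inner_def mult.commute)

lemma frob_inner_cong:
  "(\<And>j i. j < p \<Longrightarrow> i < n \<Longrightarrow> A j i = A' j i) \<Longrightarrow>
   (\<And>j i. j < p \<Longrightarrow> i < n \<Longrightarrow> B j i = B' j i) \<Longrightarrow>
   frob_inner p n A B = frob_inner p n A' B'"
  by (simp add: frob_inner_def)

lemma frob_inner_sum_left:
  "frob_inner p n (\<lambda>j i. \<Sum>k\<in>S. g k j i) B = (\<Sum>k\<in>S. frob_inner p n (g k) B)"
  unfolding frob_inner_def by (simp add: sum_distrib_right sum.swap[of _ S])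

lemma frob_inner_scale_left: "frob_inner p n (\<lambda>j i. a * A j i) B = a * frob_inner p n A B"
  unfolding frob_inner_def by (simp add: sum_distrib_left mult.assoc)

lemma frob_inner_diff_left:
  "frob_inner p n (\<lambda>j i. A j i - A' j i) B = frob_inner p n A B - frob_inner p n A' B"
  unfolding frob_inner_def by (simp add: sum_subtractf left_diff_distrib)

lemma frob_inner_self_nonneg: "frob_inner p n A A \<ge> 0"
  unfolding frob_inner_def by (auto intro!: sum_nonneg)

lemma frob_inner_self_eq_0_iff: "frob_inner p n A A = 0 \<longleftrightarrow> (\<forall>j<p. \<forall>i<n. A j i = 0)"
proof -
  have "\<And>j. 0 \<le> (\<Sum>i<n. A j i * A j i)" by (auto intro!: sum_nonneg)
  then show ?thesis unfolding frob_inner_def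
    by (simp add: sum_nonneg_eq_0_iff) blast
qed

lemma frob_inner_normalize_self:
  assumes "frob_inner p n A A \<noteq> 0"
  shows "frob_inner p n (\<lambda>j i. A j i / frob p n A) (\<lambda>j i. A j i / frob p n A) = 1"
proof -
  define f where "f = frob p n A"
  have ff: "f * f = frob_inner p n A A" and "f > 0"
    using assms frob_inner_self_nonneg[of p n A] by (auto simp: f_def frob_eq_sqrt_frob_inner)
  have "frob_inner p n (\<lambda>j i. A j i / f) (\<lambda>j i. A j i / f) = frob_inner p n A A / (f * f)"
    using frob_inner_scale_left[of p n "1/f" A] frob_inner_scale_left[of p n "1/f" "\<lambda>j i. A j i / f"]
      frob_inner_commute[of p n A "\<lambda>j i. A j i / f"]
    by simp
  also have "\<dots> = 1" using ff assms by simp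
  finally show ?thesis by (simp add: f_def)
qed

lemma frob_inner_lin_comb_left:
  "frob_inner p n (lin_comb vs c) B = (\<Sum>k<length vs. c k * frob_inner p n (vs!k) B)"
  unfolding lin_comb_def by (simp add: frob_inner_sum_left frob_inner_scale_left)

lemma frob_inner_lin_comb_nth:
  assumes "orthonormal p n es" and "l < length es"
  shows "frob_inner p n (lin_comb es c) (es!l) = c l"
proof -
  have "frob_inner p n (lin_comb es c) (es!l) = (\<Sum>k<length es. c k * (if k = l then 1 else 0))"
    unfolding frob_inner_lin_comb_left using assms by (intro sum.cong) (auto simp: orthonormal_def)
  also have "\<dots> = c l" using assms(2) by (simp add: if_distrib cong: if_cong)
  finally show ?thesis .
qed

lemma frob_inner_lin_comb_orthonormal:
  assumes "orthonormal p n es"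
  shows "frob_inner p n (lin_comb es c) (lin_comb es d) = (\<Sum>k<length es. c k * d k)"
proof -
  have "frob_inner p n (es!k) (lin_comb es d) = d k" if "k < length es" for k
    using frob_inner_lin_comb_nth[OF assms that] by (simp add: frob_inner_commute)
  then show ?thesis by (simp add: frob_inner_lin_comb_left)
qed

lemma lin_comb_snoc: "lin_comb (vs @ [v]) c = (\<lambda>j i. lin_comb vs c j i + c (length vs) * v j i)"
  unfolding lin_comb_def by (auto simp: nth_append intro!: ext)

lemma lin_comb_diff: "lin_comb vs c j i - lin_comb vs d j i = lin_comb vs (\<lambda>k. c k - d k) j i"
  unfolding lin_comb_def by (simp add: sum_subtractf left_diff_distrib)

lemma in_span_cong:
  "(\<And>j i. j < p \<Longrightarrow> i < n \<Longrightarrow> A j i = B j i) \<Longrightarrow> in_span p n vs B \<Longrightarrow> in_span p n vs A"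
  unfolding in_span_def by auto

lemma in_span_zero: "in_span p n vs (\<lambda>j i. 0)"
  unfolding in_span_def by (rule exI[of _ "\<lambda>k. 0"]) (simp add: lin_comb_def)

lemma in_span_add:
  assumes "in_span p n vs A" and "in_span p n vs B"
  shows "in_span p n vs (\<lambda>j i. A j i + B j i)"
proof -
  obtain c d where "\<forall>j<p. \<forall>i<n. A j i = lin_comb vs c j i" "\<forall>j<p. \<forall>i<n. B j i = lin_comb vs d j i"
    using assms by (auto simp: in_span_def)
  then show ?thesis unfolding in_span_def
    by (intro exI[of _ "\<lambda>k. c k + d k"]) (simp add: lin_comb_def sum.distrib distrib_right)
qed

lemma in_span_scale:
  assumes "in_span p n vs A"
  shows "in_span p n vs (\<lambda>j i. a * A j i)"
proof -
  obtain c where "\<forall>j<p. \<forall>i<n. A j i = lin_comb vs c j i" using assms by (auto simp: in_span_def)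
  then show ?thesis unfolding in_span_def
    by (intro exI[of _ "\<lambda>k. a * c k"]) (simp add: lin_comb_def sum_distrib_left mult.assoc)
qed

lemma in_span_sum:
  "finite S \<Longrightarrow> (\<And>y. y \<in> S \<Longrightarrow> in_span p n vs (g y)) \<Longrightarrow> in_span p n vs (\<lambda>j i. \<Sum>y\<in>S. g y j i)"
  by (induction S rule: finite_induct) (simp_all add: in_span_zero in_span_add)

lemma in_span_member: "v \<in> set vs \<Longrightarrow> in_span p n vs v"
proof -
  assume "v \<in> set vs"
  then obtain l where l: "l < length vs" "vs!l = v" by (auto simp: in_set_conv_nth)
  have "lin_comb vs (\<lambda>k. if k = l then 1 else 0) = v"
    using l by (intro ext) (simp add: lin_comb_def if_distrib[of "\<lambda>c. c * _"] eq_commute[of _ l] cong: if_cong)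
  then show ?thesis unfolding in_span_def by metis
qed

lemma in_span_trans:
  assumes "\<forall>v\<in>set vs. in_span p n es v" and "in_span p n vs x"
  shows "in_span p n es x"
proof -
  obtain c where c: "\<forall>j<p. \<forall>i<n. x j i = lin_comb vs c j i"
    using assms(2) by (auto simp: in_span_def)
  have "in_span p n es (lin_comb vs c)"
    unfolding lin_comb_def using assms(1)
    by (intro in_span_sum in_span_scale) auto
  with c show ?thesis by (intro in_span_cong[of p n x]) auto
qed

lemma in_span_snoc: "in_span p n vs x \<Longrightarrow> in_span p n (vs @ [v]) x"
  by (rule in_span_trans[of vs]) (auto intro: in_span_member)

lemma orthonormal_snoc:
  assumes "orthonormal p n es" and "frob_inner p n e e = 1"
    and "\<And>l. l < length es \<Longrightarrow> frob_inner p n e (es!l) = 0"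
  shows "orthonormal p n (es @ [e])"
  unfolding orthonormal_def
proof (intro allI impI)
  fix k l assume "k < length (es @ [e])" "l < length (es @ [e])"
  then consider "k < length es" "l < length es" | "k < length es" "l = length es"
    | "k = length es" "l < length es" | "k = length es" "l = length es"
    by fastforce
  then show "frob_inner p n ((es @ [e]) ! k) ((es @ [e]) ! l) = (if k = l then 1 else 0)"
  proof cases
    case 1
    then show ?thesis using assms(1) by (simp add: nth_append orthonormal_def)
  next
    case 2
    then have "frob_inner p n (es!k) e = 0" using assms(3)[of k] frob_inner_commute[of p n e] by simp
    with 2 show ?thesis by (simp add: nth_append)
  next
    case 3
    then show ?thesis using assms(3)[of l] by (simp add: nth_append)
  next
    case 4
    then show ?thesis using assms(2) by simp
  qed
qed

lemma gram_schmidt: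
  "\<exists>es. length es \<le> length vs \<and> orthonormal p n es \<and> (\<forall>v\<in>set vs. in_span p n es v)"
proof (induction vs)
  case Nil
  show ?case by (rule exI[of _ "[]"]) (simp add: orthonormal_def)
next
  case (Cons v vs)
  then obtain es where es: "length es \<le> length vs" "orthonormal p n es"
    "\<forall>v\<in>set vs. in_span p n es v"
    by blast
  define a where "a k = frob_inner p n v (es!k)" for k
  define r where "r = (\<lambda>j i. v j i - lin_comb es a j i)"
  have r_orth: "frob_inner p n r (es!l) = 0" if "l < length es" for l
    using frob_inner_lin_comb_nth[OF es(2) that, of a] unfolding r_def frob_inner_diff_left
    by (simp add: a_def)
  show ?case
  proof (cases "frob_inner p n r r = 0")
    case True
    then have "in_span p n es v"
      unfolding in_span_def by (auto simp: frob_inner_self_eq_0_iff r_def)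
    with es show ?thesis by (intro exI[of _ es]) auto
  next
    case False
    define e where "e = (\<lambda>j i. r j i / frob p n r)"
    have "orthonormal p n (es @ [e])"
    proof (rule orthonormal_snoc[OF es(2)])
      show "frob_inner p n e e = 1" unfolding e_def by (rule frob_inner_normalize_self[OF False])
      show "frob_inner p n e (es!l) = 0" if "l < length es" for l
        using frob_inner_scale_left[of p n "1 / frob p n r" r] r_orth[OF that] by (simp add: e_def)
    qed
    moreover have "in_span p n (es @ [e]) v"
      unfolding in_span_def
    proof (intro exI[of _ "\<lambda>k. if k < length es then a k else frob p n r"] allI impI)
      fix j i
      have "frob p n r \<noteq> 0"
        using False frob_inner_self_nonneg[of p n r] by (simp add: frob_eq_sqrt_frob_inner)
      moreover have "lin_comb es (\<lambda>k. if k < length es then a k else frob p n r) = lin_comb es a"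
        by (auto simp: lin_comb_def intro!: ext sum.cong)
      ultimately show "v j i = lin_comb (es @ [e]) (\<lambda>k. if k < length es then a k else frob p n r) j i"
        by (simp add: lin_comb_snoc e_def r_def)
    qed
    ultimately show ?thesis
      using es by (intro exI[of _ "es @ [e]"]) (auto intro: in_span_snoc)
  qed
qed

section \<open>Covering the unit ball of a span\<close>

text \<open>Grid points are counted by the l1 norm of their integer coordinates; an l-infinity count
  would cost a factor sqrt m inside the power and a spurious m log m in the entropy bound.\<close>
definition int_l1_ball :: "nat \<Rightarrow> nat \<Rightarrow> int list set" where
  "int_l1_ball m M = {z. length z = m \<and> sum_list (map abs z) \<le> int M}"

lemma sum_atMost_choose_reverse:
  "(\<Sum>b\<le>M. (M - b + m) choose m) = (M + Suc m) choose Suc m"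
proof -
  have "(\<Sum>b\<le>M. (M - b + m) choose m) = (\<Sum>b\<le>M. (m + b) choose m)"
    by (rule sum.reindex_bij_witness[of _ "\<lambda>b. M - b" "\<lambda>b. M - b"]) (auto simp: add.commute)
  also have "\<dots> = (\<Sum>b\<le>M. (m + b) choose b)"
  proof -
    have "(m + b) choose m = (m + b) choose b" for b
      using binomial_symmetric[of m "m + b"] by simp
    then show ?thesis by simp
  qed
  also have "\<dots> = Suc (m + M) choose M" by (rule sum_choose_lower)
  also have "\<dots> = (M + Suc m) choose Suc m"
    using binomial_symmetric[of M "Suc (m + M)"] by (simp add: add.commute)
  finally show ?thesis .
qed

lemma card_int_l1_ball:
  "finite (int_l1_ball m M) \<and> card (int_l1_ball m M) \<le> 2 ^ m * ((M + m) choose m)"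
proof (induction m arbitrary: M)
  case 0
  have "int_l1_ball 0 M = {[]}" by (auto simp: int_l1_ball_def)
  then show ?case by simp
next
  case (Suc m)
  define F where "F b = (\<Union>sg\<in>{1::int, -1}. (\<lambda>z. sg * int b # z) ` int_l1_ball m (M - b))" for b
  have sub: "int_l1_ball (Suc m) M \<subseteq> (\<Union>b\<le>M. F b)"
  proof
    fix z assume z: "z \<in> int_l1_ball (Suc m) M"
    then obtain a z' where zz: "z = a # z'" and "length z' = m"
      by (cases z) (auto simp: int_l1_ball_def)
    moreover have "\<bar>a\<bar> + sum_list (map abs z') \<le> int M" using z zz by (simp add: int_l1_ball_def)
    moreover have "sum_list (map abs z') \<ge> 0" by (induction z') auto
    ultimately have "nat \<bar>a\<bar> \<le> M" and "z' \<in> int_l1_ball m (M - nat \<bar>a\<bar>)"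
      by (auto simp: int_l1_ball_def of_nat_diff)
    moreover have "a = (if a \<ge> 0 then 1 else -1) * int (nat \<bar>a\<bar>)" by simp
    ultimately show "z \<in> (\<Union>b\<le>M. F b)"
      unfolding F_def zz by (cases "a \<ge> 0") (auto intro!: bexI[of _ "nat \<bar>a\<bar>"] image_eqI[of _ _ z'])
  qed
  have finF: "finite (F b)" for b using Suc.IH by (simp add: F_def)
  have cardF: "card (F b) \<le> 2 * (2 ^ m * ((M - b + m) choose m))" for b
  proof -
    have "card (F b) \<le> (\<Sum>sg\<in>{1::int, -1}. card ((\<lambda>z. sg * int b # z) ` int_l1_ball m (M - b)))"
      unfolding F_def by (rule card_UN_le) simp
    also have "\<dots> \<le> (\<Sum>sg\<in>{1::int, -1}. card (int_l1_ball m (M - b)))"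
      by (intro sum_mono card_image_le) (use Suc.IH in auto)
    also have "\<dots> \<le> 2 * (2 ^ m * ((M - b + m) choose m))" using Suc.IH[of "M - b"] by simp
    finally show ?thesis .
  qed
  have finU: "finite (\<Union>b\<le>M. F b)" using finF by simp
  have "card (int_l1_ball (Suc m) M) \<le> card (\<Union>b\<le>M. F b)" by (rule card_mono[OF finU sub])
  also have "\<dots> \<le> (\<Sum>b\<le>M. card (F b))" by (rule card_UN_le) simp
  also have "\<dots> \<le> (\<Sum>b\<le>M. 2 * (2 ^ m * ((M - b + m) choose m)))" by (intro sum_mono cardF)
  also have "\<dots> = 2 ^ Suc m * (\<Sum>b\<le>M. (M - b + m) choose m)"
    by (simp add: sum_distrib_left mult.assoc)
  also have "\<dots> = 2 ^ Suc m * ((M + Suc m) choose Suc m)" by (simp only: sum_atMost_choose_reverse)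
  finally show ?case using sub finU finite_subset by blast
qed

lemma power_div_fact_le_exp: "(x::real) \<ge> 0 \<Longrightarrow> x ^ m / fact m \<le> exp x"
proof -
  assume x: "x \<ge> 0"
  obtain t where t: "exp x = (\<Sum>k<Suc m. x ^ k / fact k) + exp t / fact (Suc m) * x ^ Suc m"
    using Maclaurin_exp_le[of x "Suc m"] by blast
  have "x ^ m / fact m \<le> (\<Sum>k<Suc m. x ^ k / fact k)"
    by (rule member_le_sum) (use x in auto)
  moreover have "exp t / fact (Suc m) * x ^ Suc m \<ge> 0" using x by simp
  ultimately show ?thesis using t by linarith
qed

lemma binomial_le_exp_pow: "m > 0 \<Longrightarrow> real (N choose m) \<le> (exp 1 * real N / real m) ^ m"
proof -
  assume m: "m > 0"
  have "real (N choose m) \<le> real N ^ m / fact m"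
  proof -
    have "fact m * real (N choose m) \<le> real N ^ m"
      using binomial_fact_pow[of N m] by (metis mult.commute of_nat_fact of_nat_le_iff of_nat_mult of_nat_power)
    then show ?thesis by (simp add: field_simps)
  qed
  also have "\<dots> = (real N / real m) ^ m * (real m ^ m / fact m)"
    using m by (simp add: power_divide)
  also have "\<dots> \<le> (real N / real m) ^ m * exp (real m)"
    by (intro mult_left_mono power_div_fact_le_exp) auto
  also have "exp (real m) = exp 1 ^ m" using exp_of_nat_mult[of m 1] by simp
  also have "(real N / real m) ^ m * exp 1 ^ m = (exp 1 * real N / real m) ^ m"
    by (simp add: power_mult_distrib[symmetric] mult.commute)
  finally show ?thesis .
qed

lemma binomial_l1_grid_le:
  fixes m :: nat and eps :: real
  assumes "0 < eps" "eps \<le> 2"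
  shows "real (2 ^ m * ((nat \<lfloor>real (m + 1) / eps + real m / 2\<rfloor> + m) choose m)) \<le> (30 / eps) ^ m"
proof (cases "m = 0")
  case False
  define M where "M = nat \<lfloor>real (m + 1) / eps + real m / 2\<rfloor>"
  have "real M \<le> real (m + 1) / eps + real m / 2"
    unfolding M_def using assms by (simp add: of_nat_nat)
  also have "\<dots> \<le> 2 * real m / eps + real m / eps"
    using False assms by (intro add_mono divide_right_mono divide_left_mono) auto
  finally have "real M \<le> 3 * real m / eps" by simp
  moreover have "real m \<le> 2 * real m / eps"
    using assms mult_right_mono[of eps 2 "real m"] by (simp add: field_simps mult.commute)
  ultimately have "real (M + m) \<le> 5 * real m / eps" by simp
  then have Mm: "exp 1 * real (M + m) / real m \<le> 3 * (5 * real m / eps) / real m"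
    using False exp_le by (intro divide_right_mono mult_mono) auto
  have "real ((M + m) choose m) \<le> (exp 1 * real (M + m) / real m) ^ m"
    using False by (intro binomial_le_exp_pow) auto
  also have "\<dots> \<le> (15 / eps) ^ m"
    using Mm False by (intro power_mono) auto
  finally have "real (2 ^ m * ((M + m) choose m)) \<le> 2 ^ m * (15 / eps) ^ m"
    by (simp add: mult_left_mono)
  also have "\<dots> \<le> (30 / eps) ^ m"
    using assms by (simp add: power_mult_distrib[symmetric] power_mono)
  finally show ?thesis by (simp add: M_def)
qed simp

lemma sum_abs_le_of_sum_squares_le_1:
  fixes c :: "nat \<Rightarrow> real"
  assumes "(\<Sum>k<m. (c k)\<^sup>2) \<le> 1"
  shows "(\<Sum>k<m. \<bar>c k\<bar>) \<le> sqrt (real m + 1)"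
proof -
  define a where "a = sqrt (real m + 1)"
  have "a > 0" and a2: "a * a = real m + 1" by (simp_all add: a_def)
  have amgm: "\<bar>x\<bar> \<le> (x\<^sup>2 * a + 1 / a) / 2" for x :: real
  proof -
    have "0 \<le> (\<bar>x\<bar> * a - 1)\<^sup>2" by simp
    then have "2 * \<bar>x\<bar> * a \<le> x\<^sup>2 * a * a + 1" by (simp add: power2_eq_square algebra_simps)
    with \<open>a > 0\<close> show ?thesis by (simp add: field_simps)
  qed
  have "(\<Sum>k<m. \<bar>c k\<bar>) \<le> (\<Sum>k<m. ((c k)\<^sup>2 * a + 1 / a) / 2)"
    by (intro sum_mono amgm)
  also have "\<dots> = ((\<Sum>k<m. (c k)\<^sup>2) * a + real m / a) / 2"
    by (simp add: sum_divide_distrib[symmetric] sum.distrib sum_distrib_right)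
  also have "\<dots> \<le> (a + (real m + 1) / a) / 2"
    using assms \<open>a > 0\<close> by (intro divide_right_mono add_mono divide_right_mono) auto
  also have "\<dots> = a" using a2 \<open>a > 0\<close> by (simp add: field_simps)
  finally show ?thesis by (simp add: a_def)
qed

lemma round_to_l1_grid:
  fixes c :: "nat \<Rightarrow> real"
  assumes c: "(\<Sum>k<m. (c k)\<^sup>2) \<le> 1" and "0 < eps"
  defines "d \<equiv> eps / sqrt (real m + 1)"
  shows "map (\<lambda>k. round (c k / d)) [0..<m] \<in> int_l1_ball m (nat \<lfloor>real (m + 1) / eps + real m / 2\<rfloor>)"
    and "(\<Sum>k<m. (c k - d * of_int (round (c k / d)))\<^sup>2) \<le> eps\<^sup>2"
proof -
  have "d > 0" using \<open>0 < eps\<close> by (simp add: d_def)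
  have round_err: "\<bar>c k - d * of_int (round (c k / d))\<bar> \<le> d / 2" for k
  proof -
    have "c k - d * of_int (round (c k / d)) = d * (c k / d - of_int (round (c k / d)))"
      using \<open>d > 0\<close> by (simp add: field_simps)
    moreover have "\<bar>c k / d - of_int (round (c k / d))\<bar> \<le> 1 / 2"
      using of_int_round_abs_le[of "c k / d"] by (simp add: abs_minus_commute)
    ultimately show ?thesis
      using \<open>d > 0\<close> mult_left_mono[of _ "1 / 2" d] by (simp add: abs_mult)
  qed
  have "(\<Sum>k<m. real_of_int \<bar>round (c k / d)\<bar>) \<le> (\<Sum>k<m. \<bar>c k\<bar> / d + 1 / 2)"
  proof (rule sum_mono)
    fix k
    have "\<bar>of_int (round (c k / d)) - c k / d\<bar> \<le> 1 / 2" by (rule of_int_round_abs_le)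
    then show "real_of_int \<bar>round (c k / d)\<bar> \<le> \<bar>c k\<bar> / d + 1 / 2"
      using abs_triangle_ineq2[of "of_int (round (c k / d))" "c k / d"] \<open>d > 0\<close>
      by (simp add: abs_divide)
  qed
  also have "\<dots> = (\<Sum>k<m. \<bar>c k\<bar>) / d + real m / 2"
    by (simp add: sum.distrib sum_divide_distrib[symmetric])
  also have "\<dots> \<le> sqrt (real m + 1) / d + real m / 2"
    using sum_abs_le_of_sum_squares_le_1[OF c] \<open>d > 0\<close> by (simp add: divide_right_mono)
  also have "sqrt (real m + 1) / d = real (m + 1) / eps"
    using \<open>0 < eps\<close> by (simp add: d_def field_simps)
  finally have "(\<Sum>k<m. real_of_int \<bar>round (c k / d)\<bar>) \<le> real (m + 1) / eps + real m / 2" .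
  then have "(\<Sum>k<m. \<bar>round (c k / d)\<bar>) \<le> \<lfloor>real (m + 1) / eps + real m / 2\<rfloor>"
    by (simp add: le_floor_iff)
  then show "map (\<lambda>k. round (c k / d)) [0..<m] \<in> int_l1_ball m (nat \<lfloor>real (m + 1) / eps + real m / 2\<rfloor>)"
    using \<open>0 < eps\<close> by (simp add: int_l1_ball_def sum_list_sum_nth atLeast0LessThan)
  have "(\<Sum>k<m. (c k - d * of_int (round (c k / d)))\<^sup>2) \<le> (\<Sum>k<m. (d / 2)\<^sup>2)"
    by (intro sum_mono) (use power_mono[OF round_err abs_ge_zero, of _ 2] in simp)
  also have "\<dots> = real m / (real m + 1) * eps\<^sup>2 / 4"
    by (simp add: d_def power_divide)
  also have "\<dots> \<le> eps\<^sup>2"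
    by (simp add: field_simps)
  finally show "(\<Sum>k<m. (c k - d * of_int (round (c k / d)))\<^sup>2) \<le> eps\<^sup>2" .
qed

definition covers :: "nat \<Rightarrow> nat \<Rightarrow> real \<Rightarrow> matrix set \<Rightarrow> matrix set \<Rightarrow> bool" where
  "covers p n eps G S \<longleftrightarrow> (\<forall>x\<in>S. \<exists>g\<in>G. frob p n (\<lambda>j i. x j i - g j i) \<le> eps)"

definition span_unit_ball :: "nat \<Rightarrow> nat \<Rightarrow> matrix list \<Rightarrow> matrix set" where
  "span_unit_ball p n vs = {x. in_span p n vs x \<and> frob_inner p n x x \<le> 1}"

lemma orthonormal_span_unit_ball_cover:
  assumes es: "orthonormal p n es" and eps: "0 < eps" "eps \<le> 2"
  shows "\<exists>G. finite G \<and> real (card G) \<le> (30 / eps) ^ length es \<and>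
    covers p n eps G (span_unit_ball p n es)"
proof -
  define m where "m = length es"
  define d where "d = eps / sqrt (real m + 1)"
  define M where "M = nat \<lfloor>real (m + 1) / eps + real m / 2\<rfloor>"
  define grid where "grid z = lin_comb es (\<lambda>k. d * of_int (z!k))" for z
  have "finite (int_l1_ball m M)" and "card (int_l1_ball m M) \<le> 2 ^ m * ((M + m) choose m)"
    using card_int_l1_ball by auto
  then have fin: "finite (grid ` int_l1_ball m M)"
    and "real (card (grid ` int_l1_ball m M)) \<le> real (2 ^ m * ((M + m) choose m))"
    using card_image_le[of "int_l1_ball m M" grid] by (auto simp del: of_nat_mult of_nat_power)
  note this(2)
  also have "\<dots> \<le> (30 / eps) ^ m" unfolding M_def by (rule binomial_l1_grid_le[OF eps])
  finally have card: "real (card (grid ` int_l1_ball m M)) \<le> (30 / eps) ^ m" .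
  have "covers p n eps (grid ` int_l1_ball m M) (span_unit_ball p n es)"
    unfolding covers_def
  proof
    fix x assume "x \<in> span_unit_ball p n es"
    then obtain c where c: "\<forall>j<p. \<forall>i<n. x j i = lin_comb es c j i" and x1: "frob_inner p n x x \<le> 1"
      by (auto simp: span_unit_ball_def in_span_def)
    have "frob_inner p n x x = frob_inner p n (lin_comb es c) (lin_comb es c)"
      using c by (intro frob_inner_cong) auto
    with x1 have "(\<Sum>k<m. (c k)\<^sup>2) \<le> 1"
      by (simp add: frob_inner_lin_comb_orthonormal[OF es] m_def power2_eq_square)
    note round = round_to_l1_grid[OF this eps(1), folded d_def M_def]
    define z where "z = map (\<lambda>k. round (c k / d)) [0..<m]"
    have "z \<in> int_l1_ball m M" using round(1) by (simp add: z_def)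
    define r where "r = (\<lambda>k. c k - d * of_int (z!k))"
    have "frob_inner p n (\<lambda>j i. x j i - grid z j i) (\<lambda>j i. x j i - grid z j i)
        = frob_inner p n (lin_comb es r) (lin_comb es r)"
      using c by (intro frob_inner_cong) (simp_all add: grid_def lin_comb_diff r_def)
    also have "\<dots> = (\<Sum>k<m. (c k - d * of_int (round (c k / d)))\<^sup>2)"
      by (simp add: frob_inner_lin_comb_orthonormal[OF es] m_def r_def z_def power2_eq_square)
    also have "\<dots> \<le> eps\<^sup>2" by (rule round(2))
    finally have "frob p n (\<lambda>j i. x j i - grid z j i) \<le> eps"
      using eps real_sqrt_le_mono[of _ "eps\<^sup>2"] by (simp add: frob_eq_sqrt_frob_inner)
    with \<open>z \<in> int_l1_ball m M\<close>
    show "\<exists>g\<in>grid ` int_l1_ball m M. frob p n (\<lambda>j i. x j i - g j i) \<le> eps" by blast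
  qed
  with fin card show ?thesis by (auto simp: m_def)
qed

lemma covers_subset: "covers p n eps G S \<Longrightarrow> S' \<subseteq> S \<Longrightarrow> covers p n eps G S'"
  by (auto simp: covers_def)

lemma span_unit_ball_cover:
  assumes eps: "0 < eps" "eps \<le> 2"
  shows "\<exists>G. finite G \<and> real (card G) \<le> (30 / eps) ^ length vs \<and>
    covers p n eps G (span_unit_ball p n vs)"
proof -
  obtain es where es: "length es \<le> length vs" "orthonormal p n es" "\<forall>v\<in>set vs. in_span p n es v"
    using gram_schmidt by blast
  obtain G where G: "finite G" "real (card G) \<le> (30 / eps) ^ length es"
    "covers p n eps G (span_unit_ball p n es)"
    using orthonormal_span_unit_ball_cover[OF es(2) eps] by blast
  have "span_unit_ball p n vs \<subseteq> span_unit_ball p n es"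
    using es(3) by (auto simp: span_unit_ball_def intro: in_span_trans)
  with G(3) have "covers p n eps G (span_unit_ball p n vs)" by (rule covers_subset)
  moreover have "(30 / eps) ^ length es \<le> (30 / eps) ^ length vs"
    using es(1) eps by (intro power_increasing) (auto simp: field_simps)
  ultimately show ?thesis using G(1,2) by (intro exI[of _ G]) auto
qed

lemma covering_number_le_card:
  "finite C \<Longrightarrow> covers p n eps C S \<Longrightarrow> covering_number p n eps S \<le> card C"
  unfolding covering_number_def covers_def by (rule cInf_lower) auto

lemma covering_number_UN_le:
  assumes I: "finite I" and S: "S \<subseteq> (\<Union>i\<in>I. A i)"
    and cover: "\<And>i. i \<in> I \<Longrightarrow> \<exists>G. finite G \<and> real (card G) \<le> B \<and> covers p n eps G (A i)"
  shows "real (covering_number p n eps S) \<le> real (card I) * B"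
proof -
  obtain G where G: "\<And>i. i \<in> I \<Longrightarrow> finite (G i) \<and> real (card (G i)) \<le> B \<and> covers p n eps (G i) (A i)"
    using cover by metis
  have "covers p n eps (\<Union>i\<in>I. G i) S"
    unfolding covers_def
  proof
    fix x assume "x \<in> S"
    then obtain i where "i \<in> I" "x \<in> A i" using S by blast
    with G obtain g where "g \<in> G i" "frob p n (\<lambda>j i. x j i - g j i) \<le> eps"
      unfolding covers_def by blast
    with \<open>i \<in> I\<close> show "\<exists>g\<in>\<Union>i\<in>I. G i. frob p n (\<lambda>j i. x j i - g j i) \<le> eps" by blast
  qed
  with I G have "covering_number p n eps S \<le> card (\<Union>i\<in>I. G i)"
    by (intro covering_number_le_card) auto
  also have "\<dots> \<le> (\<Sum>i\<in>I. card (G i))" by (rule card_UN_le[OF I])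
  finally have "real (covering_number p n eps S) \<le> (\<Sum>i\<in>I. real (card (G i)))"
    by (metis of_nat_le_iff of_nat_sum)
  also have "\<dots> \<le> real (card I) * B"
    using G by (intro sum_bounded_above) auto
  finally show ?thesis .
qed

section \<open>Covering Theta_tilde\<close>

definition assignment_matrices :: "nat \<Rightarrow> nat \<Rightarrow> matrix set" where
  "assignment_matrices n K =
     {L. cluster_assignment n K L \<and> (\<forall>i k. \<not> (i < n \<and> k < K) \<longrightarrow> L i k = 0)}"

lemma cluster_assignment_row:
  assumes "cluster_assignment n K L" and "i < n"
  shows "\<exists>k<K. \<forall>k'<K. L i k' = (if k' = k then 1 else 0)"
proof -
  have "card {k. k < K \<and> L i k = 1} = 1" and zero_one: "\<forall>k<K. L i k = 0 \<or> L i k = 1"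
    using assms by (auto simp: cluster_assignment_def)
  then obtain k where k: "{k'. k' < K \<and> L i k' = 1} = {k}" by (auto simp: card_1_singleton_iff)
  have "L i k' = (if k' = k then 1 else 0)" if "k' < K" for k'
    using k zero_one that by (cases "k' = k") auto
  with k show ?thesis by blast
qed

lemma card_assignment_matrices:
  "finite (assignment_matrices n K) \<and> card (assignment_matrices n K) \<le> K ^ n"
proof -
  define mat_of where "mat_of f = (\<lambda>i k. if i < n \<and> k < K \<and> f i = k then 1 else 0 :: real)" for f :: "nat \<Rightarrow> nat"
  have sub: "assignment_matrices n K \<subseteq> mat_of ` ({..<n} \<rightarrow>\<^sub>E {..<K})"
  proof
    fix L assume L: "L \<in> assignment_matrices n K"
    define f where "f i = (if i < n then SOME k. k < K \<and> (\<forall>k'<K. L i k' = (if k' = k then 1 else 0))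
                            else undefined)" for i
    have f: "f i < K \<and> (\<forall>k'<K. L i k' = (if k' = f i then 1 else 0))" if "i < n" for i
    proof -
      have "\<exists>k. k < K \<and> (\<forall>k'<K. L i k' = (if k' = k then 1 else 0))"
        using cluster_assignment_row[of n K L i] L that by (simp add: assignment_matrices_def)
      then show ?thesis unfolding f_def using that by (simp only: if_True) (rule someI_ex)
    qed
    moreover have "f i = undefined" if "\<not> i < n" for i using that by (simp add: f_def)
    ultimately have "f \<in> {..<n} \<rightarrow>\<^sub>E {..<K}" by (auto simp: PiE_iff extensional_def)
    moreover have "L = mat_of f"
    proof (intro ext)
      fix i k
      show "L i k = mat_of f i k"
        using f[of i] L by (cases "i < n \<and> k < K") (auto simp: mat_of_def assignment_matrices_def)
    qed
    ultimately show "L \<in> mat_of ` ({..<n} \<rightarrow>\<^sub>E {..<K})" by blast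
  qed
  have fin: "finite ({..<n} \<rightarrow>\<^sub>E {..<K})" by (simp add: finite_PiE)
  then have "card (assignment_matrices n K) \<le> card (mat_of ` ({..<n} \<rightarrow>\<^sub>E {..<K}))"
    using sub by (intro card_mono) auto
  also have "\<dots> \<le> card ({..<n} \<rightarrow>\<^sub>E {..<K})" by (rule card_image_le[OF fin])
  also have "\<dots> = K ^ n" by (simp add: card_PiE)
  finally show ?thesis using sub fin finite_subset by blast
qed

lemma obtain_support_superset:
  assumes "supp_card p K mu \<le> s" and "s \<le> p"
  obtains T where "T \<subseteq> {..<p}" "card T = s" "\<And>j k. j < p \<Longrightarrow> j \<notin> T \<Longrightarrow> k < K \<Longrightarrow> mu j k = 0"
proof -
  define S where "S = {j. j < p \<and> (\<exists>k<K. mu j k \<noteq> 0)}"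
  have "S \<subseteq> {..<p}" and "finite S" and "card S \<le> s"
    using assms(1) by (auto simp: S_def supp_card_def finite_subset[of _ "{..<p}"])
  moreover have "s - card S \<le> card ({..<p} - S)"
    using \<open>S \<subseteq> {..<p}\<close> \<open>finite S\<close> assms(2) by (simp add: card_Diff_subset card_mono)
  then obtain T0 where "T0 \<subseteq> {..<p} - S" "card T0 = s - card S" "finite T0"
    by (rule obtain_subset_with_card_n)
  moreover have "S \<inter> T0 = {}" using \<open>T0 \<subseteq> {..<p} - S\<close> by blast
  ultimately have "S \<union> T0 \<subseteq> {..<p}" "card (S \<union> T0) = s"
    by (auto simp: card_Un_disjoint)
  moreover have "mu j k = 0" if "j < p" "j \<notin> S \<union> T0" "k < K" for j k
    using that by (auto simp: S_def)
  ultimately show ?thesis using that by blast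
qed

definition span_generators ::
    "nat \<Rightarrow> nat \<Rightarrow> nat \<Rightarrow> matrix \<Rightarrow> matrix \<Rightarrow> matrix \<Rightarrow> nat set \<Rightarrow> matrix list" where
  "span_generators p n K mus Ls L T =
     mult_transpose p n K mus Ls #
     map (\<lambda>(j0, k) j i. if j = j0 then L i k else 0) (List.product (sorted_list_of_set T) [0..<K])"

lemma length_span_generators:
  "finite T \<Longrightarrow> length (span_generators p n K mus Ls L T) = card T * K + 1"
  by (simp add: span_generators_def)

lemma mult_transpose_in_span_generators:
  assumes "finite T" and rows: "\<And>j k. j < p \<Longrightarrow> j \<notin> T \<Longrightarrow> k < K \<Longrightarrow> mu j k = 0"
  shows "in_span p n (span_generators p n K mus Ls L T) (mult_transpose p n K mu L)"
proof -
  define gen :: "nat \<Rightarrow> nat \<Rightarrow> matrix" where "gen j0 k = (\<lambda>j i. if j = j0 then L i k else 0)" for j0 k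
  have "gen j0 k \<in> set (span_generators p n K mus Ls L T)" if "j0 \<in> T" "k < K" for j0 k
    using that \<open>finite T\<close> by (force simp: span_generators_def gen_def)
  then have "in_span p n (span_generators p n K mus Ls L T) (\<lambda>j i. \<Sum>j0\<in>T. \<Sum>k<K. mu j0 k * gen j0 k j i)"
    using \<open>finite T\<close> by (intro in_span_sum in_span_scale in_span_member) auto
  moreover have "mult_transpose p n K mu L j i = (\<Sum>j0\<in>T. \<Sum>k<K. mu j0 k * gen j0 k j i)"
    if "j < p" "i < n" for j i
  proof -
    have "(\<Sum>k<K. mu j0 k * gen j0 k j i) = (if j = j0 then \<Sum>k<K. mu j k * L i k else 0)" for j0
      by (simp add: gen_def)
    then show ?thesis
      using that rows \<open>finite T\<close> by (cases "j \<in> T") (simp_all add: mult_transpose_def)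
  qed
  ultimately show ?thesis by (rule in_span_cong[rotated])
qed

lemma mult_transpose_ext:
  "(\<And>j i. j < p \<Longrightarrow> i < n \<Longrightarrow> mult_transpose p n K A L j i = mult_transpose p n K B L' j i) \<Longrightarrow>
   mult_transpose p n K A L = mult_transpose p n K B L'"
  by (intro ext) (metis mult_transpose_def)

lemma assignment_matrix_restrict:
  assumes "cluster_assignment n K L"
  obtains L' where "L' \<in> assignment_matrices n K"
    and "mult_transpose p n K mu L' = mult_transpose p n K mu L"
proof
  define L' where "L' = (\<lambda>i k. if i < n \<and> k < K then L i k else 0)"
  have "{k. k < K \<and> L' i k = 1} = {k. k < K \<and> L i k = 1}" if "i < n" for i
    using that by (auto simp: L'_def)
  with assms show "L' \<in> assignment_matrices n K"
    by (auto simp: assignment_matrices_def cluster_assignment_def L'_def)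
  show "mult_transpose p n K mu L' = mult_transpose p n K mu L"
    by (rule mult_transpose_ext) (simp add: mult_transpose_def L'_def)
qed

lemma Theta_tilde_subset_span_unit_balls:
  assumes "s \<le> p"
  shows "Theta_tilde p n K s mus Ls \<subseteq>
    (\<Union>(L, T) \<in> assignment_matrices n K \<times> {T. T \<subseteq> {..<p} \<and> card T = s}.
       span_unit_ball p n (span_generators p n K mus Ls L T))"
proof
  fix x assume "x \<in> Theta_tilde p n K s mus Ls"
  then obtain mu L
    where x: "x = (\<lambda>j i. (mult_transpose p n K mu L j i - mult_transpose p n K mus Ls j i) /
                  frob p n (\<lambda>j i. mult_transpose p n K mu L j i - mult_transpose p n K mus Ls j i))"
      and supp: "supp_card p K mu \<le> s" and L: "cluster_assignment n K L"
      and ne: "mult_transpose p n K mu L \<noteq> mult_transpose p n K mus Ls"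
    unfolding Theta_tilde_def by blast
  obtain L' where "L' \<in> assignment_matrices n K"
    and L'_eq: "mult_transpose p n K mu L' = mult_transpose p n K mu L"
    using assignment_matrix_restrict[OF L] by blast
  obtain T where T: "T \<subseteq> {..<p}" "card T = s" and rows: "\<And>j k. j < p \<Longrightarrow> j \<notin> T \<Longrightarrow> k < K \<Longrightarrow> mu j k = 0"
    using obtain_support_superset[OF supp assms] by blast
  have "finite T" using T(1) finite_subset by blast
  define vs where "vs = span_generators p n K mus Ls L' T"
  define D where "D j i = mult_transpose p n K mu L j i - mult_transpose p n K mus Ls j i" for j i
  have "in_span p n vs (mult_transpose p n K mu L)"
    unfolding vs_def L'_eq[symmetric]
    by (rule mult_transpose_in_span_generators[OF \<open>finite T\<close>]) (use rows in blast)
  moreover have "in_span p n vs (mult_transpose p n K mus Ls)"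
    by (rule in_span_member) (simp add: vs_def span_generators_def)
  ultimately have "in_span p n vs (\<lambda>j i. mult_transpose p n K mu L j i + (-1) * mult_transpose p n K mus Ls j i)"
    by (intro in_span_add in_span_scale)
  then have "in_span p n vs (\<lambda>j i. (1 / frob p n D) * D j i)"
    by (intro in_span_scale) (simp add: D_def)
  moreover have "frob_inner p n D D \<noteq> 0"
  proof
    assume "frob_inner p n D D = 0"
    then have "mult_transpose p n K mu L = mult_transpose p n K mus Ls"
      by (intro mult_transpose_ext) (simp add: frob_inner_self_eq_0_iff D_def)
    with ne show False ..
  qed
  ultimately have "x \<in> span_unit_ball p n vs"
    using frob_inner_normalize_self[of p n D] unfolding x D_def[symmetric] by (simp add: span_unit_ball_def)
  moreover have "(L', T) \<in> assignment_matrices n K \<times> {T. T \<subseteq> {..<p} \<and> card T = s}"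
    using \<open>L' \<in> assignment_matrices n K\<close> T by simp
  ultimately show "x \<in> (\<Union>(L, T) \<in> assignment_matrices n K \<times> {T. T \<subseteq> {..<p} \<and> card T = s}.
       span_unit_ball p n (span_generators p n K mus Ls L T))"
    unfolding vs_def by blast
qed

lemma covering_number_Theta_tilde_le:
  assumes s: "1 \<le> s" "s \<le> p" and eps: "0 < eps" "eps \<le> 2"
  shows "real (covering_number p n eps (Theta_tilde p n K s mus Ls))
    \<le> real K ^ n * (exp 1 * real p / real s) ^ s * (30 / eps) ^ (s * K + 1)"
proof -
  define TS where "TS = {T. T \<subseteq> {..<p} \<and> card T = s}"
  have fin_TS: "finite TS" unfolding TS_def by (rule finite_subset[of _ "Pow {..<p}"]) auto
  have "real (card TS) \<le> (exp 1 * real p / real s) ^ s"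
    using binomial_le_exp_pow[of s p] s n_subsets[of "{..<p}" s] by (simp add: TS_def)
  moreover have "real (card (assignment_matrices n K)) \<le> real K ^ n"
    using card_assignment_matrices[of n K] by (metis of_nat_le_iff of_nat_power)
  ultimately have card: "real (card (assignment_matrices n K \<times> TS)) \<le> real K ^ n * (exp 1 * real p / real s) ^ s"
    by (simp add: card_cartesian_product mult_mono)
  have "real (covering_number p n eps (Theta_tilde p n K s mus Ls))
      \<le> real (card (assignment_matrices n K \<times> TS)) * (30 / eps) ^ (s * K + 1)"
  proof (rule covering_number_UN_le)
    show "finite (assignment_matrices n K \<times> TS)" using card_assignment_matrices fin_TS by simp
    show "Theta_tilde p n K s mus Ls \<subseteq>
      (\<Union>(L, T) \<in> assignment_matrices n K \<times> TS. span_unit_ball p n (span_generators p n K mus Ls L T))"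
      unfolding TS_def by (rule Theta_tilde_subset_span_unit_balls[OF s(2)])
    fix LT assume "LT \<in> assignment_matrices n K \<times> TS"
    then have "length (span_generators p n K mus Ls (fst LT) (snd LT)) = s * K + 1"
      by (auto simp: TS_def length_span_generators finite_subset)
    with span_unit_ball_cover[OF eps]
    show "\<exists>G. finite G \<and> real (card G) \<le> (30 / eps) ^ (s * K + 1) \<and>
        covers p n eps G ((\<lambda>(L, T). span_unit_ball p n (span_generators p n K mus Ls L T)) LT)"
      by (metis case_prod_beta)
  qed
  also have "\<dots> \<le> real K ^ n * (exp 1 * real p / real s) ^ s * (30 / eps) ^ (s * K + 1)"
    using card eps by (intro mult_right_mono) auto
  finally show ?thesis .
qed

lemma ln_le_of_le_covering_bound:
  fixes n K s p :: nat and eps N :: real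
  assumes "1 \<le> n" "1 \<le> K" "1 \<le> s" "s \<le> p" "0 < eps" "eps \<le> 2" "0 \<le> N"
    and N: "N \<le> real K ^ n * (exp 1 * real p / real s) ^ s * (30 / eps) ^ (s * K + 1)"
  shows "ln N \<le> 7 * (real n * ln (real K) + real s * ln (real p / real s)
                 + real s * real K * ln (real n) + real s * real K * ln (6 / eps))"
proof -
  define L6 where "L6 = ln (6 / eps)"
  have "1 \<le> ln (3::real)" using exp_le by (simp add: ln_ge_iff)
  moreover have "ln 3 \<le> L6" using assms(5,6) by (simp add: L6_def field_simps)
  moreover have "ln (5::real) \<le> 2 * ln 3"
    using ln_realpow[of 3 2] ln_le_cancel_iff[of 5 9] by simp
  ultimately have L6: "1 \<le> L6" "ln 5 \<le> 2 * L6" by linarith+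
  have "1 * 1 \<le> real s * real K" using assms(2,3) by (intro mult_mono) auto
  then have sK: "1 \<le> real s * real K" by simp
  have nonneg: "0 \<le> real n * ln (real K)" "0 \<le> real s * ln (real p / real s)"
    "0 \<le> real s * real K * ln (real n)"
    using assms(1-4) by auto
  have "ln N \<le> real n * ln (real K) + real s * (1 + ln (real p / real s)) + real (s * K + 1) * (ln 5 + L6)"
  proof (cases "N > 0")
    case True
    have "ln N \<le> ln (real K ^ n * (exp 1 * real p / real s) ^ s * (30 / eps) ^ (s * K + 1))"
      using True N assms(2-5) by (subst ln_le_cancel_iff) auto
    also have "\<dots> = real n * ln (real K) + real s * (1 + ln (real p / real s)) + real (s * K + 1) * (ln 5 + L6)"
      using assms(2-5) ln_mult[of 5 "6 / eps"]
      by (simp add: ln_mult ln_realpow ln_div L6_def algebra_simps)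
    finally show ?thesis .
  next
    case False
    \<comment> \<open>N = 0, and Isabelle's ln 0 is 0\<close>
    with \<open>0 \<le> N\<close> have "ln N = 0" by simp
    moreover have "0 \<le> real (s * K + 1) * (ln 5 + L6)" using L6 by simp
    moreover have "0 \<le> real s * (1 + ln (real p / real s))"
      using nonneg(2) by (simp add: distrib_left)
    ultimately show ?thesis using nonneg(1) by linarith
  qed
  moreover have "real (s * K + 1) * (ln 5 + L6) \<le> 2 * (real s * real K) * (3 * L6)"
    using sK L6 by (intro mult_mono) (auto simp: mult.commute)
  moreover have "real s \<le> real s * real K * L6"
  proof -
    have "1 * 1 \<le> real K * L6" using assms(2) L6 by (intro mult_mono) auto
    then show ?thesis using mult_left_mono[of 1 "real K * L6" "real s"] by (simp add: mult.assoc)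
  qed
  ultimately show ?thesis using nonneg by (simp add: L6_def algebra_simps)
qed

theorem mainTheorem4:
  fixes c0 C0 :: real
  assumes "c0 > 0" and "C0 > 0"
  shows "\<exists>C>0. \<forall>(n::nat) (p::nat) (K::nat) (s::nat) mus Ls.
     n \<ge> 2 \<and> K \<ge> 2 \<and> 1 \<le> s \<and> s \<le> p \<and>
     cluster_assignment n K Ls \<and> supp_card p K mus \<le> s \<and>
     (\<forall>k<K. \<forall>k'<K. k \<noteq> k' \<longrightarrow> col_dist p mus k k' \<ge> c0) \<and>
     (frob p n (mult_transpose p n K mus Ls))\<^sup>2 \<le> C0 * real s * real n \<longrightarrow>
     (\<forall>eps. 0 < eps \<and> eps \<le> 2 \<longrightarrow>
        ln (real (covering_number p n eps (Theta_tilde p n K s mus Ls)))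
          \<le> C * (real n * ln (real K) + real s * ln (real p / real s)
                 + real s * real K * ln (real n) + real s * real K * ln (6 / eps)))"
proof (intro exI[of _ 7] conjI allI impI)
  fix n p K s :: nat and mus Ls :: matrix and eps :: real
  assume "n \<ge> 2 \<and> K \<ge> 2 \<and> 1 \<le> s \<and> s \<le> p \<and>
     cluster_assignment n K Ls \<and> supp_card p K mus \<le> s \<and>
     (\<forall>k<K. \<forall>k'<K. k \<noteq> k' \<longrightarrow> col_dist p mus k k' \<ge> c0) \<and>
     (frob p n (mult_transpose p n K mus Ls))\<^sup>2 \<le> C0 * real s * real n"
    and "0 < eps \<and> eps \<le> 2"
  then show "ln (real (covering_number p n eps (Theta_tilde p n K s mus Ls)))
      \<le> 7 * (real n * ln (real K) + real s * ln (real p / real s)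
             + real s * real K * ln (real n) + real s * real K * ln (6 / eps))"
    by (intro ln_le_of_le_covering_bound covering_number_Theta_tilde_le) auto
qed simp

end
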